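(* Let $Q>0$ and let $\gamma_-$ be the smaller root of $t-\log t=Q+1$. Let $w(t)=\frac{1}{\gamma_-}t^{\frac{1-\gamma_-}{\gamma_-}}$ on $I=[0,1]$. Then $[w]_{RH_1,[0,1]}=Q$ and $$\langle w\rangle_I\,e^{-\langle\log w\rangle_I}=\gamma_-\exp\Big(\frac{1-\gamma_-}{\gamma_-}\Big).$$
   Context: $\langle f\rangle_J=\frac1{|J|}\int_J f$. For a weight $w$ on $[0,1]$, $[w]_{RH_1,[0,1]}=\sup_{J\subset[0,1]}\Big\langle \frac{w}{\langle w\rangle_J}\log\frac{w}{\langle w\rangle_J}\Big\rangle_J$, supremum over subintervals $J$. *)

theory Defs
  imports "HOL-Analysis.Analysis"
begin

definition avg :: "(real \<Rightarrow> real) \<Rightarrow> real \<Rightarrow> real \<Rightarrow> real" where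
  "avg f a b = (LINT x:{a..b}|lborel. f x) / (b - a)"

definition RH1_01 :: "(real \<Rightarrow> real) \<Rightarrow> ereal" where
  "RH1_01 w = (SUP ab \<in> {(a,b). 0 \<le> a \<and> a < b \<and> b \<le> 1}.
      ereal (avg (\<lambda>x. w x / avg w (fst ab) (snd ab) * ln (w x / avg w (fst ab) (snd ab)))
                 (fst ab) (snd ab)))"

end

theory Submission
  imports Defs "HOL-Real_Asymp.Real_Asymp"
begin

text \<open>With p = (1 - \<gamma>)/\<gamma> the weight is w(t) = (p+1) t^p, and for J = [a,b] \<subseteq> [0,1]
  the integrals of w and of w log w over J are explicit.  Writing D = b^(p+1) - a^(p+1) for the
  integral of w over J, the RH_1 average over J equals ln(p+1) - p/(p+1) minus the correction
  (D log(D/|J|) - p (b^(p+1) log b - a^(p+1) log a)) / D.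
  Since b^(p+1) log(b^(p+1)/b) = p b^(p+1) log b, the correction is non-negative by the log-sum
  inequality for the masses a^(p+1) and D of [0,a] and [a,b], and it vanishes for a = 0.  Hence
  the supremum is attained on [0,1] and equals ln(p+1) - p/(p+1) = \<gamma> - log \<gamma> - 1 = Q.  The
  second identity follows from \<langle>w\<rangle> = 1 and \<langle>log w\<rangle> = ln(p+1) - p.\<close>

lemma set_integral_Icc_Ioo:
  fixes f :: "real \<Rightarrow> real"
  shows set_integrable_Icc_iff_Ioo:
      "set_integrable lborel {a..b} f \<longleftrightarrow> set_integrable lborel {a<..<b} f"
    and "(LINT x:{a..b}|lborel. f x) = (LINT x:{a<..<b}|lborel. f x)"
  by (rule set_integrable_discrete_difference[where X="{a,b}"]
      set_integral_discrete_difference[where X="{a,b}"]; auto)+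

lemma set_integral_Icc_FTC_nonneg:
  fixes f F :: "real \<Rightarrow> real"
  assumes "a < b"
    and "\<And>x. a < x \<Longrightarrow> x < b \<Longrightarrow> (F has_real_derivative f x) (at x)"
    and "\<And>x. a < x \<Longrightarrow> x < b \<Longrightarrow> isCont f x"
    and "\<And>x. a < x \<Longrightarrow> x < b \<Longrightarrow> 0 \<le> f x"
    and "(F \<longlongrightarrow> F a) (at_right a)" and "(F \<longlongrightarrow> F b) (at_left b)"
  shows "set_integrable lborel {a..b} f" and "(LINT x:{a..b}|lborel. f x) = F b - F a"
proof -
  have ab: "ereal a < ereal b" using assms(1) by simp
  note FTC = interval_integral_FTC_nonneg[OF ab, where F=F and f=f and A="F a" and B="F b"]
  have hyps: "set_integrable lborel (einterval a b) f \<and> (LBINT x=ereal a..ereal b. f x) = F b - F a"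
    using assms by (intro conjI FTC) (auto simp: ereal_tendsto_simps1)
  then show "set_integrable lborel {a..b} f"
    by (simp add: set_integrable_Icc_iff_Ioo)
  show "(LINT x:{a..b}|lborel. f x) = F b - F a"
    using hyps assms(1) by (simp add: set_integral_Icc_Ioo interval_integral_Ioo)
qed

lemma set_integral_powr:
  fixes p a b :: real
  assumes p: "p > -1" and a: "0 \<le> a" and ab: "a < b"
  shows "set_integrable lborel {a..b} (\<lambda>x. x powr p)"
    and "(LINT x:{a..b}|lborel. x powr p) = (b powr (p+1) - a powr (p+1)) / (p+1)"
proof -
  define F where "F x = x powr (p+1) / (p+1)" for x
  have F': "(F has_real_derivative x powr p) (at x)" if "0 < x" for x
    unfolding F_def using that p by (auto intro!: derivative_eq_intros)
  have "(F \<longlongrightarrow> F a) (at_right a)"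
  proof (cases "a = 0")
    case True
    with p show ?thesis unfolding F_def by simp real_asymp
  next
    case False
    with a F'[of a] show ?thesis by (auto simp: isCont_def filterlim_at_split dest: DERIV_isCont)
  qed
  moreover have "(F \<longlongrightarrow> F b) (at_left b)"
    using a ab F'[of b] by (auto simp: isCont_def filterlim_at_split dest: DERIV_isCont)
  ultimately have "set_integrable lborel {a..b} (\<lambda>x. x powr p) \<and>
      (LINT x:{a..b}|lborel. x powr p) = F b - F a"
    using a ab F' by (intro conjI set_integral_Icc_FTC_nonneg) (auto intro!: continuous_intros)
  then show "set_integrable lborel {a..b} (\<lambda>x. x powr p)"
    and "(LINT x:{a..b}|lborel. x powr p) = (b powr (p+1) - a powr (p+1)) / (p+1)"
    by (auto simp: F_def diff_divide_distrib)
qed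

lemma set_integral_powr_ln:
  fixes p a b :: real
  assumes p: "p > -1" and a: "0 \<le> a" and ab: "a < b" and b: "b \<le> 1"
  shows "set_integrable lborel {a..b} (\<lambda>x. x powr p * ln x)"
    and "(LINT x:{a..b}|lborel. x powr p * ln x) =
      (a powr (p+1) * (1/(p+1) - ln a) - b powr (p+1) * (1/(p+1) - ln b)) / (p+1)"
proof -
  define F where "F x = x powr (p+1) * (1/(p+1) - ln x) / (p+1)" for x
  have F': "(F has_real_derivative - (x powr p * ln x)) (at x)" if "0 < x" for x
  proof -
    \<comment> \<open>abstracting p + 1 keeps \<open>field_simps\<close> from expanding powers of the sum\<close>
    define q where "q = p + 1"
    have q: "q > 0" and p_eq: "p = q - 1"
      using p by (simp_all add: q_def)
    have "x powr q = x powr (q - 1) * x"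
      using that by (simp add: powr_diff)
    with q that show ?thesis
      unfolding F_def p_eq by (auto intro!: derivative_eq_intros simp: field_simps)
  qed
  have "(F \<longlongrightarrow> F a) (at_right a)"
  proof (cases "a = 0")
    case True
    with p show ?thesis unfolding F_def by simp real_asymp
  next
    case False
    with a F'[of a] show ?thesis by (auto simp: isCont_def filterlim_at_split dest: DERIV_isCont)
  qed
  moreover have "(F \<longlongrightarrow> F b) (at_left b)"
    using a ab F'[of b] by (auto simp: isCont_def filterlim_at_split dest: DERIV_isCont)
  moreover have "0 \<le> - (x powr p * ln x)" if "a < x" "x < b" for x
    using that a b by (simp add: mult_nonneg_nonpos)
  ultimately have neg: "set_integrable lborel {a..b} (\<lambda>x. - (x powr p * ln x)) \<and>
      (LINT x:{a..b}|lborel. - (x powr p * ln x)) = F b - F a"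
    using a ab F' by (intro conjI set_integral_Icc_FTC_nonneg) (auto intro!: continuous_intros)
  then show int: "set_integrable lborel {a..b} (\<lambda>x. x powr p * ln x)"
    using set_integrable_mult_right[of "-1" lborel "{a..b}" "\<lambda>x. - (x powr p * ln x)"] by simp
  show "(LINT x:{a..b}|lborel. x powr p * ln x) =
      (a powr (p+1) * (1/(p+1) - ln a) - b powr (p+1) * (1/(p+1) - ln b)) / (p+1)"
    using neg set_integral_uminus[OF int] by (simp add: F_def diff_divide_distrib)
qed

lemma set_integral_ln_0_1:
  shows "set_integrable lborel {0<..<1} (\<lambda>x::real. ln x)"
    and "(LINT x:{0<..<1}|lborel. ln (x::real)) = -1"
proof -
  \<comment> \<open>at 0 both sides vanish, since 0 powr 0 = 0 and ln 0 = 0\<close>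
  have eq: "(\<lambda>x::real. x powr 0 * ln x) = ln"
    by (auto simp: fun_eq_iff)
  show "set_integrable lborel {0<..<1} (\<lambda>x::real. ln x)"
    and "(LINT x:{0<..<1}|lborel. ln (x::real)) = -1"
    using set_integral_powr_ln[of 0 0 1] unfolding eq
    by (simp_all add: set_integral_Icc_Ioo set_integrable_Icc_iff_Ioo)
qed

lemma log_sum_inequality:
  fixes x y s t :: real
  assumes "x > 0" "y > 0" "s > 0" "t > 0"
  shows "(x + y) * ln ((x + y) / (s + t)) \<le> x * ln (x / s) + y * ln (y / t)"
proof -
  define r where "r = (x + y) / (s + t)"
  have r: "r > 0" using assms by (simp add: r_def)
  have tangent: "u * ln (u / v) \<ge> u * ln r + u - v * r" if "u > 0" "v > 0" for u v
  proof -
    have "ln (v * r / u) \<le> v * r / u - 1"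
      using that r by (intro ln_le_minus_one) simp
    also have "ln (v * r / u) = ln r - ln (u / v)"
      using that r by (simp add: ln_div ln_mult)
    finally have "u * (ln r - ln (u / v)) \<le> u * (v * r / u - 1)"
      using that by (intro mult_left_mono) auto
    with that show ?thesis by (simp add: algebra_simps)
  qed
  have "(s + t) * r = x + y"
    using assms by (simp add: r_def)
  then have "(x + y) * ln r = (x * ln r + x - s * r) + (y * ln r + y - t * r)"
    by (simp add: algebra_simps)
  also have "\<dots> \<le> x * ln (x / s) + y * ln (y / t)"
    using tangent[of x s] tangent[of y t] assms by linarith
  finally show ?thesis by (simp add: r_def)
qed

definition entropy_avg :: "(real \<Rightarrow> real) \<Rightarrow> real \<Rightarrow> real \<Rightarrow> real" where
  "entropy_avg w a b = avg (\<lambda>x. w x / avg w a b * ln (w x / avg w a b)) a b"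

lemma RH1_01_eq_SUP_entropy_avg:
  "RH1_01 w = (SUP (a, b) \<in> {(a, b). 0 \<le> a \<and> a < b \<and> b \<le> 1}. ereal (entropy_avg w a b))"
  by (simp add: RH1_01_def entropy_avg_def case_prod_beta)

lemma entropy_avg_eq:
  fixes w :: "real \<Rightarrow> real"
  assumes "a < b" and w_nonneg: "\<And>x. x \<in> {a..b} \<Longrightarrow> 0 \<le> w x"
    and "set_integrable lborel {a..b} w" "set_integrable lborel {a..b} (\<lambda>x. w x * ln (w x))"
    and m: "avg w a b > 0"
  shows "entropy_avg w a b = avg (\<lambda>x. w x * ln (w x)) a b / avg w a b - ln (avg w a b)"
proof -
  define m where "m = avg w a b"
  have pointwise: "w x / m * ln (w x / m) = (1 / m) * (w x * ln (w x)) - (ln m / m) * w x"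
    if "x \<in> {a..b}" for x
  proof (cases "w x = 0")
    case False
    with w_nonneg[OF that] m show ?thesis by (simp add: m_def ln_div field_simps)
  qed simp
  have "(LINT x:{a..b}|lborel. w x / m * ln (w x / m))
      = (LINT x:{a..b}|lborel. (1 / m) * (w x * ln (w x)) - (ln m / m) * w x)"
    by (rule set_lebesgue_integral_cong) (simp, blast intro: pointwise)
  also have "\<dots> = (1 / m) * (LINT x:{a..b}|lborel. w x * ln (w x)) - (ln m / m) * (m * (b - a))"
    using assms by (simp add: set_integral_diff m_def avg_def)
  finally show ?thesis
    using m \<open>a < b\<close> unfolding entropy_avg_def m_def[symmetric] by (simp add: avg_def field_simps)
qed

definition power_weight :: "real \<Rightarrow> real \<Rightarrow> real" where
  "power_weight p t = (p + 1) * t powr p"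

lemma set_integral_power_weight:
  fixes p a b :: real
  assumes "p > -1" "0 \<le> a" "a < b"
  shows "set_integrable lborel {a..b} (power_weight p)"
    and "(LINT x:{a..b}|lborel. power_weight p x) = b powr (p+1) - a powr (p+1)"
  using set_integral_powr[OF assms] assms(1) unfolding power_weight_def[abs_def] by simp_all

lemma avg_power_weight:
  fixes p a b :: real
  assumes "p > -1" "0 \<le> a" "a < b"
  shows "avg (power_weight p) a b = (b powr (p+1) - a powr (p+1)) / (b - a)"
    and "avg (power_weight p) a b > 0"
proof -
  show "avg (power_weight p) a b = (b powr (p+1) - a powr (p+1)) / (b - a)"
    using set_integral_power_weight(2)[OF assms] by (simp add: avg_def)
  moreover have "a powr (p+1) < b powr (p+1)"
    using assms by (intro powr_less_mono2) auto
  ultimately show "avg (power_weight p) a b > 0"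
    using assms by simp
qed

lemma set_integral_power_weight_ln:
  fixes p a b :: real
  assumes p: "p > -1" and "0 \<le> a" "a < b" "b \<le> 1"
  shows "set_integrable lborel {a..b} (\<lambda>x. power_weight p x * ln (power_weight p x))"
    and "(LINT x:{a..b}|lborel. power_weight p x * ln (power_weight p x))
      = (b powr (p+1) - a powr (p+1)) * (ln (p+1) - p / (p+1))
        + p * (b powr (p+1) * ln b - a powr (p+1) * ln a)"
proof -
  have pointwise: "power_weight p x * ln (power_weight p x)
      = (p + 1) * ln (p + 1) * x powr p + p * (p + 1) * (x powr p * ln x)" if "x \<in> {a<..<b}" for x
  proof -
    have ln_w: "ln (power_weight p x) = ln (p + 1) + p * ln x"
      using that assms by (simp add: power_weight_def ln_mult ln_powr)
    show ?thesis
      unfolding ln_w by (simp add: power_weight_def algebra_simps)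
  qed
  note powr = set_integral_powr[OF p \<open>0 \<le> a\<close> \<open>a < b\<close>]
    and powr_ln = set_integral_powr_ln[OF assms]
  have "set_integrable lborel {a<..<b}
      (\<lambda>x. (p + 1) * ln (p + 1) * x powr p + p * (p + 1) * (x powr p * ln x))"
    using powr(1) powr_ln(1) by (simp add: set_integrable_Icc_iff_Ioo)
  then show "set_integrable lborel {a..b} (\<lambda>x. power_weight p x * ln (power_weight p x))"
    unfolding set_integrable_Icc_iff_Ioo by (subst set_integrable_cong[OF refl refl pointwise])
  have "(LINT x:{a..b}|lborel. power_weight p x * ln (power_weight p x))
      = (LINT x:{a<..<b}|lborel. (p + 1) * ln (p + 1) * x powr p + p * (p + 1) * (x powr p * ln x))"
    unfolding set_integral_Icc_Ioo by (rule set_lebesgue_integral_cong) (simp, blast intro: pointwise)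
  also have "\<dots> = (p + 1) * ln (p + 1) * (LINT x:{a..b}|lborel. x powr p)
      + p * (p + 1) * (LINT x:{a..b}|lborel. x powr p * ln x)"
    using powr(1) powr_ln(1) by (simp add: set_integral_Icc_Ioo set_integrable_Icc_iff_Ioo)
  also have "\<dots> = (b powr (p+1) - a powr (p+1)) * (ln (p+1) - p / (p+1))
        + p * (b powr (p+1) * ln b - a powr (p+1) * ln a)"
  proof -
    define q where "q = p + 1"
    have "q > 0" "p = q - 1"
      using p by (simp_all add: q_def)
    then show ?thesis
      unfolding powr(2) powr_ln(2) q_def[symmetric] by (simp add: field_simps)
  qed
  finally show "(LINT x:{a..b}|lborel. power_weight p x * ln (power_weight p x))
      = (b powr (p+1) - a powr (p+1)) * (ln (p+1) - p / (p+1))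
        + p * (b powr (p+1) * ln b - a powr (p+1) * ln a)" .
qed

lemma entropy_avg_power_weight:
  fixes p a b :: real
  assumes p: "p > -1" and "0 \<le> a" "a < b" "b \<le> 1"
  defines "D \<equiv> b powr (p+1) - a powr (p+1)"
  shows "entropy_avg (power_weight p) a b = ln (p+1) - p / (p+1)
      - (D * ln (D / (b - a)) - p * (b powr (p+1) * ln b - a powr (p+1) * ln a)) / D"
proof -
  note m = avg_power_weight[OF p \<open>0 \<le> a\<close> \<open>a < b\<close>]
  have "D > 0"
    using m \<open>a < b\<close> by (simp add: D_def zero_less_divide_iff)
  have frac: "(D * c + e) / h / (D / h) = c + e / D" if "h > 0" for c e h :: real
    using that \<open>D > 0\<close> by (simp add: field_simps)
  have "0 \<le> power_weight p x" for x
    using p by (simp add: power_weight_def)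
  then have "entropy_avg (power_weight p) a b
      = avg (\<lambda>x. power_weight p x * ln (power_weight p x)) a b / avg (power_weight p) a b
        - ln (avg (power_weight p) a b)"
    using assms(2-4) m(2)
    by (intro entropy_avg_eq set_integral_power_weight(1) set_integral_power_weight_ln(1) p)
  also have "\<dots> = ln (p+1) - p / (p+1) + p * (b powr (p+1) * ln b - a powr (p+1) * ln a) / D
      - ln (D / (b - a))"
    unfolding avg_def set_integral_power_weight_ln(2)[OF assms(1-4)]
      set_integral_power_weight(2)[OF p \<open>0 \<le> a\<close> \<open>a < b\<close>] D_def[symmetric]
    using \<open>a < b\<close> by (subst frac) simp_all
  finally show ?thesis
    using \<open>D > 0\<close> by (simp add: diff_divide_distrib)
qed

lemma log_sum_powr:
  fixes p a b :: real
  assumes "p > -1" "0 \<le> a" "a < b"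
  shows "p * (b powr (p+1) * ln b - a powr (p+1) * ln a)
    \<le> (b powr (p+1) - a powr (p+1)) * ln ((b powr (p+1) - a powr (p+1)) / (b - a))"
proof -
  have ln_powr: "ln (x powr (p+1) / x) = p * ln x" if "x > 0" for x
    using that by (simp add: ln_div ln_powr algebra_simps)
  show ?thesis
  proof (cases "a = 0")
    case True
    with assms ln_powr[of b] show ?thesis by simp
  next
    case False
    with assms have "a > 0" and "a powr (p+1) < b powr (p+1)"
      by (auto intro: powr_less_mono2)
    with log_sum_inequality[of "a powr (p+1)" "b powr (p+1) - a powr (p+1)" a "b - a"]
      ln_powr[of a] ln_powr[of b] \<open>a < b\<close>
    show ?thesis by (simp add: algebra_simps)
  qed
qed

lemma RH1_01_power_weight:
  fixes p :: real
  assumes p: "p > -1"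
  shows "RH1_01 (power_weight p) = ereal (ln (p+1) - p / (p+1))"
  unfolding RH1_01_eq_SUP_entropy_avg
proof (rule cSup_eq_maximum)
  have "entropy_avg (power_weight p) 0 1 = ln (p+1) - p / (p+1)"
    using entropy_avg_power_weight[OF p, of 0 1] by simp
  then show "ereal (ln (p+1) - p / (p+1))
      \<in> (\<lambda>(a, b). ereal (entropy_avg (power_weight p) a b)) ` {(a, b). 0 \<le> a \<and> a < b \<and> b \<le> 1}"
    by (intro rev_image_eqI[of "(0, 1)"]) auto
next
  fix r assume "r \<in> (\<lambda>(a, b). ereal (entropy_avg (power_weight p) a b))
      ` {(a, b). 0 \<le> a \<and> a < b \<and> b \<le> 1}"
  then obtain a b where ab: "0 \<le> a" "a < b" "b \<le> 1"
    and r: "r = ereal (entropy_avg (power_weight p) a b)"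
    by auto
  have "a powr (p+1) < b powr (p+1)"
    using p ab by (intro powr_less_mono2) auto
  with log_sum_powr[OF p ab(1,2)] show "r \<le> ereal (ln (p+1) - p / (p+1))"
    unfolding r entropy_avg_power_weight[OF p ab] by simp
qed

lemma avg_power_weight_exp_avg_ln:
  fixes p :: real
  assumes p: "p > -1"
  shows "avg (power_weight p) 0 1 * exp (- avg (\<lambda>t. ln (power_weight p t)) 0 1) = exp p / (p + 1)"
proof -
  have "(LINT t:{0<..<1}|lborel. ln (power_weight p t)) = (LINT t:{0<..<1}|lborel. ln (p + 1) + p * ln t)"
    using p by (intro set_lebesgue_integral_cong) (auto simp: power_weight_def ln_mult ln_powr)
  also have "\<dots> = ln (p + 1) - p"
  proof -
    have "set_integrable lborel {0<..<1} (\<lambda>t::real. ln (p + 1))"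
      unfolding set_integrable_Icc_iff_Ioo[symmetric] by (rule borel_integrable_atLeastAtMost') simp
    then show ?thesis
      using set_integral_ln_0_1 by (simp add: set_integral_add set_integral_const)
  qed
  finally have "avg (\<lambda>t. ln (power_weight p t)) 0 1 = ln (p + 1) - p"
    by (simp add: avg_def set_integral_Icc_Ioo)
  moreover have "avg (power_weight p) 0 1 = 1"
    using avg_power_weight(1)[OF p, of 0 1] by simp
  ultimately show ?thesis
    using p by (simp add: exp_diff)
qed

theorem mainTheorem10:
  fixes Q \<gamma> :: real and w :: "real \<Rightarrow> real"
  assumes "Q > 0"
    and "\<gamma> > 0" and "\<gamma> - ln \<gamma> = Q + 1"
    and "\<forall>t>0. t - ln t = Q + 1 \<longrightarrow> \<gamma> \<le> t"
    and "\<forall>t. w t = (1 / \<gamma>) * t powr ((1 - \<gamma>) / \<gamma>)"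
  shows "RH1_01 w = ereal Q \<and>
         avg w 0 1 * exp (- avg (\<lambda>t. ln (w t)) 0 1) = \<gamma> * exp ((1 - \<gamma>) / \<gamma>)"
proof -
  define p where "p = (1 - \<gamma>) / \<gamma>"
  have p1: "p + 1 = 1 / \<gamma>"
    using \<open>\<gamma> > 0\<close> by (simp add: p_def field_simps)
  have "p + 1 > 0"
    unfolding p1 using \<open>\<gamma> > 0\<close> by simp
  then have "p > -1"
    by simp
  have "w = power_weight p"
    unfolding power_weight_def p1 using assms(5) by (simp add: fun_eq_iff p_def)
  moreover have "ln (p + 1) - p / (p + 1) = Q"
    using assms(2,3) unfolding p1 by (simp add: p_def ln_div)
  moreover have "exp p / (p + 1) = \<gamma> * exp ((1 - \<gamma>) / \<gamma>)"
    unfolding p1 by (simp add: p_def)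
  ultimately show ?thesis
    using RH1_01_power_weight[OF \<open>p > -1\<close>] avg_power_weight_exp_avg_ln[OF \<open>p > -1\<close>] by simp
qed

end
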